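(* Let $U_n\subset C^n([a,b],\mathbb{K})$ (with $\mathbb{K}=\mathbb{R}$ or $\mathbb{C}$, $a<b$) be a subspace of dimension $n+1$ possessing a non-negative Bernstein basis $p_{n,0},\dots,p_{n,n}$ for $\{a,b\}$. Suppose $f_0,f_1\in U_n$ are such that $f_0>0$ on $[a,b]$ and $f_1/f_0$ is strictly increasing on $[a,b]$, and write $f_0=\sum_{k=0}^n\beta_kp_{n,k}$, $f_1=\sum_{k=0}^n\gamma_kp_{n,k}$. Then there exist points $t_0,\dots,t_n\in[a,b]$ and positive coefficients $\alpha_0,\dots,\alpha_n$ such that the operator $B_nf=\sum_{k=0}^nf(t_k)\alpha_kp_{n,k}$ satisfies $B_nf_0=f_0$ and $B_nf_1=f_1$ if and only if $\beta_k>0$ for all $k$ and $$\frac{f_1(a)}{f_0(a)}=\frac{\gamma_0}{\beta_0}\le\frac{\gamma_k}{\beta_k}\le\frac{\gamma_n}{\beta_n}=\frac{f_1(b)}{f_0(b)}\quad\text{for all }k=0,\dots,n.$$ Moreover, such points and coefficients, when they exist, are unique.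
   Context: A function $f\in C^m([a,b],\mathbb{K})$ has a zero of order $k$ at $c$ if $f(c)=\dots=f^{(k-1)}(c)=0$ and $f^{(k)}(c)\ne0$ (one-sided derivatives at endpoints). For an $(m+1)$-dimensional space $V\subset C^m([a,b],\mathbb{K})$, a Bernstein basis for $\{a,b\}$ is a system $p_{m,0},\dots,p_{m,m}$ in $V$ such that each $p_{m,k}$ has a zero of order exactly $k$ at $a$ and of order exactly $m-k$ at $b$ (it is a basis of $V$). It is non-negative if each $p_{m,k}$ is real-valued and $\ge0$ on $[a,b]$. *)

theory Defs
  imports "HOL-Analysis.Analysis"
begin

text \<open>Scalars: the field 'a is a real normed field (instances: real, complex).
  Functions on [a,b] are represented by total functions real => 'a; only their
  values on {a..b} matter.\<close>

definition deriv_seq :: "nat \<Rightarrow> real \<Rightarrow> real \<Rightarrow> (real \<Rightarrow> 'a::real_normed_vector)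
    \<Rightarrow> (nat \<Rightarrow> real \<Rightarrow> 'a) \<Rightarrow> bool" where
  "deriv_seq m a b f D \<longleftrightarrow>
     (\<forall>x\<in>{a..b}. D 0 x = f x) \<and>
     (\<forall>j<m. \<forall>x\<in>{a..b}. (D j has_vector_derivative D (Suc j) x) (at x within {a..b})) \<and>
     (\<forall>j\<le>m. continuous_on {a..b} (D j))"

definition Cm_on :: "nat \<Rightarrow> real \<Rightarrow> real \<Rightarrow> (real \<Rightarrow> 'a::real_normed_vector) \<Rightarrow> bool" where
  "Cm_on m a b f \<longleftrightarrow> (\<exists>D. deriv_seq m a b f D)"

definition zero_order :: "nat \<Rightarrow> real \<Rightarrow> real \<Rightarrow> (real \<Rightarrow> 'a::real_normed_vector)
    \<Rightarrow> real \<Rightarrow> nat \<Rightarrow> bool" where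
  "zero_order m a b f c k \<longleftrightarrow> k \<le> m \<and>
     (\<exists>D. deriv_seq m a b f D \<and> (\<forall>j<k. D j c = 0) \<and> D k c \<noteq> 0)"

text \<open>p 0, ..., p m (real-valued, viewed as 'a-valued via of_real) is a Bernstein basis for
  {a,b} of the space they span in C^m([a,b],'a): each p k is C^m, has a zero of order exactly
  k at a and of order exactly m-k at b, and the p k are linearly independent over 'a on [a,b].
  (The space V is then the 'a-span of p 0..p m, of dimension m+1.)\<close>
definition bernstein_basis :: "nat \<Rightarrow> real \<Rightarrow> real \<Rightarrow> (nat \<Rightarrow> real \<Rightarrow> real)
    \<Rightarrow> 'a::real_normed_field itself \<Rightarrow> bool" where
  "bernstein_basis m a b p TYPE('a) \<longleftrightarrow>
     (\<forall>k\<le>m. Cm_on m a b (\<lambda>x. (of_real (p k x) :: 'a))) \<and>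
     (\<forall>k\<le>m. zero_order m a b (\<lambda>x. (of_real (p k x) :: 'a)) a k) \<and>
     (\<forall>k\<le>m. zero_order m a b (\<lambda>x. (of_real (p k x) :: 'a)) b (m - k)) \<and>
     (\<forall>c::nat \<Rightarrow> 'a. (\<forall>x\<in>{a..b}. (\<Sum>k\<le>m. c k * of_real (p k x)) = 0) \<longrightarrow> (\<forall>k\<le>m. c k = 0))"

definition nonneg_basis :: "nat \<Rightarrow> real \<Rightarrow> real \<Rightarrow> (nat \<Rightarrow> real \<Rightarrow> real) \<Rightarrow> bool" where
  "nonneg_basis m a b p \<longleftrightarrow> (\<forall>k\<le>m. \<forall>x\<in>{a..b}. 0 \<le> p k x)"

text \<open>Real positivity / real order for elements of 'a (meaningful only for real elements).\<close>
definition real_pos :: "'a::real_normed_field \<Rightarrow> bool" where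
  "real_pos z \<longleftrightarrow> (\<exists>r::real. r > 0 \<and> z = of_real r)"

definition real_le :: "'a::real_normed_field \<Rightarrow> 'a \<Rightarrow> bool" where
  "real_le z w \<longleftrightarrow> (\<exists>r s::real. z = of_real r \<and> w = of_real s \<and> r \<le> s)"

definition bern_op :: "nat \<Rightarrow> (nat \<Rightarrow> real \<Rightarrow> real) \<Rightarrow> (nat \<Rightarrow> real) \<Rightarrow> (nat \<Rightarrow> real)
    \<Rightarrow> (real \<Rightarrow> 'a::real_normed_field) \<Rightarrow> real \<Rightarrow> 'a" where
  "bern_op n p t \<alpha> f x = (\<Sum>k\<le>n. f (t k) * of_real (\<alpha> k) * of_real (p k x))"

definition admissible :: "nat \<Rightarrow> real \<Rightarrow> real \<Rightarrow> (nat \<Rightarrow> real \<Rightarrow> real)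
    \<Rightarrow> (real \<Rightarrow> 'a::real_normed_field) \<Rightarrow> (real \<Rightarrow> 'a) \<Rightarrow> (nat \<Rightarrow> real) \<Rightarrow> (nat \<Rightarrow> real) \<Rightarrow> bool" where
  "admissible n a b p f0 f1 t \<alpha> \<longleftrightarrow>
     (\<forall>k\<le>n. t k \<in> {a..b} \<and> \<alpha> k > 0) \<and>
     (\<forall>x\<in>{a..b}. bern_op n p t \<alpha> f0 x = f0 x) \<and>
     (\<forall>x\<in>{a..b}. bern_op n p t \<alpha> f1 x = f1 x)"

end

theory Submission
  imports Defs
begin

text \<open>Since the \<open>p k\<close> are linearly independent, \<open>B\<^sub>n f = f\<close> for \<open>f = \<Sum>\<^sub>k c\<^sub>k p\<^sub>k\<close>
  just says \<open>f(t\<^sub>k) \<alpha>\<^sub>k = c\<^sub>k\<close> for every \<open>k\<close>. For \<open>f\<^sub>0, f\<^sub>1\<close> this decouples into one problem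
  per node: find \<open>t\<^sub>k\<close> and \<open>\<alpha>\<^sub>k > 0\<close> with \<open>f\<^sub>0(t\<^sub>k) \<alpha>\<^sub>k = \<beta>\<^sub>k\<close> and \<open>f\<^sub>1(t\<^sub>k) \<alpha>\<^sub>k = \<gamma>\<^sub>k\<close>, i.e.
  \<open>\<beta>\<^sub>k > 0\<close> and \<open>(f\<^sub>1/f\<^sub>0)(t\<^sub>k) = \<gamma>\<^sub>k/\<beta>\<^sub>k\<close>. As \<open>f\<^sub>1/f\<^sub>0\<close> is continuous and strictly increasing,
  this is solvable exactly when \<open>\<gamma>\<^sub>k/\<beta>\<^sub>k\<close> lies between its values at \<open>a\<close> and \<open>b\<close>, and then
  uniquely. Finally, the zero orders of the basis at the endpoints leave only \<open>p\<^sub>0\<close> nonzero at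
  \<open>a\<close> and only \<open>p\<^sub>n\<close> nonzero at \<open>b\<close>, so \<open>(f\<^sub>1/f\<^sub>0)(a) = \<gamma>\<^sub>0/\<beta>\<^sub>0\<close> and \<open>(f\<^sub>1/f\<^sub>0)(b) = \<gamma>\<^sub>n/\<beta>\<^sub>n\<close>.\<close>

lemma Cm_on_continuous_on:
  assumes "Cm_on m a b f"
  shows "continuous_on {a..b} f"
proof -
  obtain D where "deriv_seq m a b f D"
    using assms unfolding Cm_on_def by blast
  then have "continuous_on {a..b} (D 0)" and "\<forall>x\<in>{a..b}. D 0 x = f x"
    unfolding deriv_seq_def by auto
  then show ?thesis
    using continuous_on_eq by blast
qed

lemma zero_order_eq_0_iff:
  assumes "zero_order m a b f c k" and "c \<in> {a..b}"
  shows "f c = 0 \<longleftrightarrow> k \<noteq> 0"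
proof -
  obtain D where D: "deriv_seq m a b f D" "\<forall>j<k. D j c = 0" "D k c \<noteq> 0"
    using assms(1) unfolding zero_order_def by blast
  then have "D 0 c = f c"
    using assms(2) by (auto simp: deriv_seq_def)
  then show ?thesis
    using D by (cases "k = 0") auto
qed

lemma continuous_on_of_real_comp_iff:
  fixes g :: "'b::metric_space \<Rightarrow> real"
  shows "continuous_on S (\<lambda>x. of_real (g x) :: 'a::real_normed_div_algebra) \<longleftrightarrow> continuous_on S g"
  by (simp add: continuous_on_iff)

lemma real_le_between_of_real_iff:
  "real_le (of_real x) z \<and> real_le z (of_real y) \<longleftrightarrow>
     (\<exists>s. z = (of_real s :: 'a::real_normed_field) \<and> x \<le> s \<and> s \<le> y)"
  unfolding real_le_def by auto

context
  fixes n :: nat and a b :: real and p :: "nat \<Rightarrow> real \<Rightarrow> real"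
  assumes basis: "bernstein_basis n a b p TYPE('a::real_normed_field)"
begin

lemma bernstein_expansion_continuous_on:
  assumes "\<forall>x\<in>{a..b}. f x = (\<Sum>k\<le>n. c k * of_real (p k x) :: 'a)"
  shows "continuous_on {a..b} f"
proof -
  have "continuous_on {a..b} (\<lambda>x. of_real (p k x) :: 'a)" if "k \<le> n" for k
    using basis that Cm_on_continuous_on unfolding bernstein_basis_def by blast
  then have "continuous_on {a..b} (\<lambda>x. \<Sum>k\<le>n. c k * of_real (p k x) :: 'a)"
    by (intro continuous_on_sum continuous_on_mult continuous_on_const) auto
  then show ?thesis
    using assms continuous_on_eq by fastforce
qed

lemma bernstein_coeffs_unique:
  assumes "\<forall>x\<in>{a..b}. (\<Sum>k\<le>n. c k * of_real (p k x)) = (\<Sum>k\<le>n. d k * of_real (p k x) :: 'a)"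
    and "k \<le> n"
  shows "c k = d k"
proof -
  have "(\<Sum>k\<le>n. (c k - d k) * of_real (p k x)) =
      (\<Sum>k\<le>n. c k * of_real (p k x)) - (\<Sum>k\<le>n. d k * of_real (p k x) :: 'a)" for x
    by (simp add: left_diff_distrib sum_subtractf)
  then have diff_zero: "\<forall>x\<in>{a..b}. (\<Sum>k\<le>n. (c k - d k) * of_real (p k x)) = (0 :: 'a)"
    using assms(1) by simp
  have indep: "\<forall>e :: nat \<Rightarrow> 'a. (\<forall>x\<in>{a..b}. (\<Sum>k\<le>n. e k * of_real (p k x)) = 0) \<longrightarrow>
      (\<forall>k\<le>n. e k = 0)"
    using basis unfolding bernstein_basis_def by (elim conjE) assumption
  have "c k - d k = 0"
    using indep[rule_format, OF diff_zero[rule_format] assms(2)] .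
  then show ?thesis
    by simp
qed

lemma bernstein_basis_at_left_eq_0_iff:
  assumes "a \<le> b" and "k \<le> n"
  shows "(of_real (p k a) :: 'a) = 0 \<longleftrightarrow> k \<noteq> 0"
  using basis assms zero_order_eq_0_iff[of n a b "\<lambda>x. of_real (p k x) :: 'a" a k]
  unfolding bernstein_basis_def by auto

lemma bernstein_basis_at_right_eq_0_iff:
  assumes "a \<le> b" and "k \<le> n"
  shows "(of_real (p k b) :: 'a) = 0 \<longleftrightarrow> k \<noteq> n"
  using basis assms zero_order_eq_0_iff[of n a b "\<lambda>x. of_real (p k x) :: 'a" b "n - k"]
  unfolding bernstein_basis_def by auto

lemma bernstein_sum_at_left:
  assumes "a \<le> b"
  shows "(\<Sum>k\<le>n. c k * of_real (p k a)) = c 0 * (of_real (p 0 a) :: 'a)"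
proof -
  have "(\<Sum>k\<le>n. c k * of_real (p k a)) = (\<Sum>k\<in>{0}. c k * (of_real (p k a) :: 'a))"
    using assms bernstein_basis_at_left_eq_0_iff by (intro sum.mono_neutral_right) auto
  then show ?thesis
    by simp
qed

lemma bernstein_sum_at_right:
  assumes "a \<le> b"
  shows "(\<Sum>k\<le>n. c k * of_real (p k b)) = c n * (of_real (p n b) :: 'a)"
proof -
  have "(\<Sum>k\<le>n. c k * of_real (p k b)) = (\<Sum>k\<in>{n}. c k * (of_real (p k b) :: 'a))"
    using assms bernstein_basis_at_right_eq_0_iff by (intro sum.mono_neutral_right) auto
  then show ?thesis
    by simp
qed

context
  fixes f0 f1 :: "real \<Rightarrow> 'a" and \<beta> \<gamma> :: "nat \<Rightarrow> 'a"
  assumes ab: "a \<le> b"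
    and f0_expansion: "\<forall>x\<in>{a..b}. f0 x = (\<Sum>k\<le>n. \<beta> k * of_real (p k x))"
    and f1_expansion: "\<forall>x\<in>{a..b}. f1 x = (\<Sum>k\<le>n. \<gamma> k * of_real (p k x))"
begin

lemma bernstein_ratio_at_left: "f1 a / f0 a = \<gamma> 0 / \<beta> 0"
proof -
  have "f0 a = \<beta> 0 * of_real (p 0 a)" and "f1 a = \<gamma> 0 * of_real (p 0 a)"
    using ab f0_expansion f1_expansion bernstein_sum_at_left by auto
  moreover have "(of_real (p 0 a) :: 'a) \<noteq> 0"
    using ab bernstein_basis_at_left_eq_0_iff by simp
  ultimately show ?thesis
    by simp
qed

lemma bernstein_ratio_at_right: "f1 b / f0 b = \<gamma> n / \<beta> n"
proof -
  have "f0 b = \<beta> n * of_real (p n b)" and "f1 b = \<gamma> n * of_real (p n b)"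
    using ab f0_expansion f1_expansion bernstein_sum_at_right by auto
  moreover have "(of_real (p n b) :: 'a) \<noteq> 0"
    using ab bernstein_basis_at_right_eq_0_iff by simp
  ultimately show ?thesis
    by simp
qed

end

lemma bern_op_reproduces_iff:
  assumes "\<forall>x\<in>{a..b}. f x = (\<Sum>k\<le>n. c k * of_real (p k x) :: 'a)"
  shows "(\<forall>x\<in>{a..b}. bern_op n p t \<alpha> f x = f x) \<longleftrightarrow> (\<forall>k\<le>n. f (t k) * of_real (\<alpha> k) = c k)"
proof -
  have "bern_op n p t \<alpha> f x = (\<Sum>k\<le>n. (f (t k) * of_real (\<alpha> k)) * of_real (p k x))" for x
    unfolding bern_op_def ..
  then show ?thesis
    using assms bernstein_coeffs_unique[of "\<lambda>k. f (t k) * of_real (\<alpha> k)" c] by auto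
qed

lemma admissible_iff_nodes:
  assumes "\<forall>x\<in>{a..b}. f0 x = (\<Sum>k\<le>n. \<beta> k * of_real (p k x) :: 'a)"
    and "\<forall>x\<in>{a..b}. f1 x = (\<Sum>k\<le>n. \<gamma> k * of_real (p k x))"
  shows "admissible n a b p f0 f1 t \<alpha> \<longleftrightarrow>
    (\<forall>k\<le>n. t k \<in> {a..b} \<and> \<alpha> k > 0 \<and>
      f0 (t k) * of_real (\<alpha> k) = \<beta> k \<and> f1 (t k) * of_real (\<alpha> k) = \<gamma> k)"
  unfolding admissible_def bern_op_reproduces_iff[OF assms(1)] bern_op_reproduces_iff[OF assms(2)]
  by blast

end

lemma node_ratio:
  fixes f0 f1 :: "real \<Rightarrow> 'a::real_normed_field"
  assumes "\<forall>x\<in>{a..b}. f1 x / f0 x = of_real (g x)"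
    and "t \<in> {a..b}" "\<alpha> > 0" "f0 t * of_real \<alpha> = \<beta>" "f1 t * of_real \<alpha> = \<gamma>"
  shows "\<gamma> / \<beta> = of_real (g t)"
proof -
  have "\<gamma> / \<beta> = f1 t / f0 t"
    unfolding assms(4,5)[symmetric] using assms(3)
    by (simp add: nonzero_mult_divide_mult_cancel_right)
  then show ?thesis
    using assms(1,2) by simp
qed

lemma node_exists_iff:
  fixes f0 f1 :: "real \<Rightarrow> 'a::real_normed_field"
  assumes "a \<le> b"
    and f0_pos: "\<forall>x\<in>{a..b}. real_pos (f0 x)"
    and ratio: "\<forall>x\<in>{a..b}. f1 x / f0 x = of_real (g x)"
    and "mono_on {a..b} g" and "continuous_on {a..b} g"
  shows "(\<exists>t \<alpha>. t \<in> {a..b} \<and> \<alpha> > 0 \<and> f0 t * of_real \<alpha> = \<beta> \<and> f1 t * of_real \<alpha> = \<gamma>) \<longleftrightarrow>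
    real_pos \<beta> \<and> real_le (of_real (g a)) (\<gamma> / \<beta>) \<and> real_le (\<gamma> / \<beta>) (of_real (g b))"
    (is "?node \<longleftrightarrow> ?coeffs")
proof
  assume ?node
  then obtain t \<alpha> where t: "t \<in> {a..b}" and "\<alpha> > 0"
    and \<beta>: "f0 t * of_real \<alpha> = \<beta>" and \<gamma>: "f1 t * of_real \<alpha> = \<gamma>"
    by blast
  obtain v where "v > 0" and v: "f0 t = of_real v"
    using f0_pos t unfolding real_pos_def by blast
  have "\<beta> = of_real (v * \<alpha>)" and "v * \<alpha> > 0"
    using \<beta> v \<open>v > 0\<close> \<open>\<alpha> > 0\<close> by auto
  then have "real_pos \<beta>"
    unfolding real_pos_def by blast
  moreover have "\<gamma> / \<beta> = of_real (g t)"
    using node_ratio[OF ratio t \<open>\<alpha> > 0\<close> \<beta> \<gamma>] .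
  moreover have "g a \<le> g t" and "g t \<le> g b"
    using assms(4) t by (auto intro: mono_onD)
  ultimately show ?coeffs
    using real_le_between_of_real_iff by blast
next
  assume ?coeffs
  then obtain r s where "r > 0" and r: "\<beta> = of_real r"
    and s: "\<gamma> / \<beta> = of_real s" and "g a \<le> s" "s \<le> g b"
    unfolding real_pos_def real_le_between_of_real_iff by blast
  then obtain t where t: "t \<in> {a..b}" and "g t = s"
    using IVT'[of g a s b] assms(1,5) by auto
  obtain v where "v > 0" and v: "f0 t = of_real v"
    using f0_pos t unfolding real_pos_def by blast
  have "f0 t * of_real (r / v) = of_real (v * (r / v))"
    using v by simp
  also have "\<dots> = \<beta>"
    using r \<open>v > 0\<close> by simp
  finally have \<beta>: "f0 t * of_real (r / v) = \<beta>" .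
  have "f1 t * of_real (r / v) = (f1 t / f0 t) * \<beta>"
    using v \<open>v > 0\<close> r by (simp add: field_simps flip: of_real_mult of_real_divide)
  also have "\<dots> = \<gamma> / \<beta> * \<beta>"
    using ratio t \<open>g t = s\<close> s by simp
  also have "\<dots> = \<gamma>"
    using r \<open>r > 0\<close> by simp
  finally show ?node
    using t \<beta> \<open>r > 0\<close> \<open>v > 0\<close> by (intro exI[of _ t] exI[of _ "r / v"]) simp
qed

lemma node_unique:
  fixes f0 f1 :: "real \<Rightarrow> 'a::real_normed_field"
  assumes f0_pos: "\<forall>x\<in>{a..b}. real_pos (f0 x)"
    and ratio: "\<forall>x\<in>{a..b}. f1 x / f0 x = of_real (g x)"
    and "strict_mono_on {a..b} g"
    and t: "t \<in> {a..b}" "\<alpha> > 0" "f0 t * of_real \<alpha> = \<beta>" "f1 t * of_real \<alpha> = \<gamma>"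
    and t': "t' \<in> {a..b}" "\<alpha>' > 0" "f0 t' * of_real \<alpha>' = \<beta>" "f1 t' * of_real \<alpha>' = \<gamma>"
  shows "t = t' \<and> \<alpha> = \<alpha>'"
proof -
  have "g t = g t'"
    using node_ratio[OF ratio t] node_ratio[OF ratio t'] by simp
  then have "t = t'"
    using strict_mono_on_eqD[OF assms(3)] t(1) t'(1) by blast
  then have "f0 t * of_real \<alpha> = f0 t * of_real \<alpha>'"
    using t(3) t'(3) by simp
  moreover have "f0 t \<noteq> 0"
    using f0_pos t unfolding real_pos_def by fastforce
  ultimately show ?thesis
    using \<open>t = t'\<close> by simp
qed

theorem theorem2:
  fixes a b :: real and n :: nat
    and p :: "nat \<Rightarrow> real \<Rightarrow> real"
    and f0 f1 :: "real \<Rightarrow> 'a::real_normed_field"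
    and \<beta> \<gamma> :: "nat \<Rightarrow> 'a"
  assumes "a < b"
    and "bernstein_basis n a b p TYPE('a)"
    and "nonneg_basis n a b p"
    and "\<forall>x\<in>{a..b}. f0 x = (\<Sum>k\<le>n. \<beta> k * of_real (p k x))"
    and "\<forall>x\<in>{a..b}. f1 x = (\<Sum>k\<le>n. \<gamma> k * of_real (p k x))"
    and "\<forall>x\<in>{a..b}. real_pos (f0 x)"
    and "\<exists>g. strict_mono_on {a..b} g \<and> (\<forall>x\<in>{a..b}. f1 x / f0 x = of_real (g x))"
  shows "((\<exists>t \<alpha>. admissible n a b p f0 f1 t \<alpha>) \<longleftrightarrow>
           (\<forall>k\<le>n. real_pos (\<beta> k)) \<and>
           f1 a / f0 a = \<gamma> 0 / \<beta> 0 \<and> \<gamma> n / \<beta> n = f1 b / f0 b \<and>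
           (\<forall>k\<le>n. real_le (\<gamma> 0 / \<beta> 0) (\<gamma> k / \<beta> k) \<and> real_le (\<gamma> k / \<beta> k) (\<gamma> n / \<beta> n)))
         \<and> (\<forall>t \<alpha> t' \<alpha>'. admissible n a b p f0 f1 t \<alpha> \<longrightarrow> admissible n a b p f0 f1 t' \<alpha>' \<longrightarrow>
              (\<forall>k\<le>n. t k = t' k \<and> \<alpha> k = \<alpha>' k))"
proof -
  note basis = assms(2) and f0_expansion = assms(4) and f1_expansion = assms(5)
    and f0_pos = assms(6)
  obtain g where g_mono: "strict_mono_on {a..b} g"
    and ratio: "\<forall>x\<in>{a..b}. f1 x / f0 x = of_real (g x)"
    using assms(7) by blast
  have ab: "a \<le> b" and ends: "a \<in> {a..b}" "b \<in> {a..b}"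
    using assms(1) by auto
  have at_left: "f1 a / f0 a = \<gamma> 0 / \<beta> 0" and at_right: "\<gamma> n / \<beta> n = f1 b / f0 b"
    using bernstein_ratio_at_left[OF basis ab f0_expansion f1_expansion]
      bernstein_ratio_at_right[OF basis ab f0_expansion f1_expansion] by simp_all
  have "continuous_on {a..b} (\<lambda>x. f1 x / f0 x)"
    using f0_pos bernstein_expansion_continuous_on[OF basis] f0_expansion f1_expansion
    by (intro continuous_on_divide) (auto simp: real_pos_def)
  then have g_cont: "continuous_on {a..b} g"
    using ratio continuous_on_eq continuous_on_of_real_comp_iff by (metis (no_types, lifting))
  have node_exists: "(\<exists>t \<alpha>. t \<in> {a..b} \<and> \<alpha> > 0 \<and> f0 t * of_real \<alpha> = \<beta> k \<and> f1 t * of_real \<alpha> = \<gamma> k)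
      \<longleftrightarrow> real_pos (\<beta> k) \<and> real_le (\<gamma> 0 / \<beta> 0) (\<gamma> k / \<beta> k) \<and> real_le (\<gamma> k / \<beta> k) (\<gamma> n / \<beta> n)"
    for k
    using node_exists_iff[OF ab f0_pos ratio strict_mono_on_imp_mono_on[OF g_mono] g_cont]
      at_left at_right ratio ends by simp
  have "(\<exists>t \<alpha>. admissible n a b p f0 f1 t \<alpha>) \<longleftrightarrow>
      (\<forall>k\<le>n. \<exists>t \<alpha>. t \<in> {a..b} \<and> \<alpha> > 0 \<and> f0 t * of_real \<alpha> = \<beta> k \<and> f1 t * of_real \<alpha> = \<gamma> k)"
    unfolding admissible_iff_nodes[OF basis f0_expansion f1_expansion] by metis
  moreover have "\<forall>t \<alpha> t' \<alpha>'. admissible n a b p f0 f1 t \<alpha> \<longrightarrow> admissible n a b p f0 f1 t' \<alpha>' \<longrightarrow>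
      (\<forall>k\<le>n. t k = t' k \<and> \<alpha> k = \<alpha>' k)"
    unfolding admissible_iff_nodes[OF basis f0_expansion f1_expansion]
    using node_unique[OF f0_pos ratio g_mono] by blast
  ultimately show ?thesis
    unfolding node_exists using at_left at_right by blast
qed

end
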